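(* Let $f,g:2^{[n]}\to\mathbb N$ be monotone (decreasing) functions with $|f|\le|g|$. Then there is a function $p:2^{[n]}\times 2^{[n]}\to\mathbb N$ such that (i) $p(X,Y)\neq 0$ only if $X,Y\subset[n]$ are disjoint; (ii) $|p|=|f|$; (iii) $\sum_{X\subset[n]}p(X,Y)\le g(Y)$ for every $Y\subset[n]$, and $\sum_{Y\subset[n]}p(X,Y)=f(X)$ for every $X\subset[n]$.
   Context: $\mathbb N$ includes $0$; $[n]=\{1,\dots,n\}$. A function $f:2^{[n]}\to\mathbb N$ is monotone (decreasing) if $f(A)\le f(A\setminus\{i\})$ for every set $A\subset[n]$ and element $i$. For $f:2^{[n]}\to\mathbb N$, $|f|=\sum_{X\subset[n]}f(X)$; for $p:2^{[n]}\times2^{[n]}\to\mathbb N$, $|p|=\sum_{X,Y\subset[n]}p(X,Y)$. *)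

theory Defs
  imports Main
begin

text \<open>Functions 2^[n] -> N are modelled as nat set => nat; only values on
subsets of {1..n} matter.\<close>

definition monotone_dec :: "nat \<Rightarrow> (nat set \<Rightarrow> nat) \<Rightarrow> bool" where
  "monotone_dec n f \<longleftrightarrow> (\<forall>A i. A \<subseteq> {1..n} \<longrightarrow> f A \<le> f (A - {i}))"

definition norm1 :: "nat \<Rightarrow> (nat set \<Rightarrow> nat) \<Rightarrow> nat" where
  "norm1 n f = (\<Sum>X\<in>Pow {1..n}. f X)"

definition norm2 :: "nat \<Rightarrow> (nat set \<Rightarrow> nat set \<Rightarrow> nat) \<Rightarrow> nat" where
  "norm2 n p = (\<Sum>X\<in>Pow {1..n}. \<Sum>Y\<in>Pow {1..n}. p X Y)"

end

theory Submission
  imports Defs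
begin

text \<open>The required \<open>p\<close> is a transport plan from the supplies \<open>f(X)\<close> to the capacities
\<open>g(Y)\<close> along the bipartite relation \<open>X \<inter> Y = {}\<close> on \<open>2^[n] \<times> 2^[n]\<close>. By the weighted form of
Hall's theorem it exists as soon as every family \<open>\<A>\<close> of sets satisfies
\<open>f(\<A>) \<le> g(D)\<close>, where \<open>D\<close> is the family of sets disjoint from some member of \<open>\<A>\<close>.
Replace \<open>\<A>\<close> by its up-closure \<open>U\<close>; complementation maps \<open>U\<close> bijectively onto \<open>D\<close>, a down-set.
Harris' inequality says that a decreasing function has at most its global average on an
up-set and at least its global average on a down-set, so
\<open>2^n f(U) \<le> |U| |f| \<le> |D| |g| \<le> 2^n g(D)\<close>.\<close>

definition nbhd :: "('a \<Rightarrow> 'b \<Rightarrow> bool) \<Rightarrow> 'b set \<Rightarrow> 'a set \<Rightarrow> 'b set" where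
  "nbhd E T A = {t \<in> T. \<exists>s\<in>A. E s t}"

definition hall_condition ::
    "('a \<Rightarrow> 'b \<Rightarrow> bool) \<Rightarrow> 'a set \<Rightarrow> 'b set \<Rightarrow> ('a \<Rightarrow> nat) \<Rightarrow> ('b \<Rightarrow> nat) \<Rightarrow> bool" where
  "hall_condition E S T a b \<longleftrightarrow> (\<forall>A\<subseteq>S. sum a A \<le> sum b (nbhd E T A))"

definition feasible_flow :: "('a \<Rightarrow> 'b \<Rightarrow> bool) \<Rightarrow> 'a set \<Rightarrow> 'b set \<Rightarrow>
    ('a \<Rightarrow> nat) \<Rightarrow> ('b \<Rightarrow> nat) \<Rightarrow> ('a \<Rightarrow> 'b \<Rightarrow> nat) \<Rightarrow> bool" where
  "feasible_flow E S T a b p \<longleftrightarrow>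
     (\<forall>s t. p s t \<noteq> 0 \<longrightarrow> s \<in> S \<and> t \<in> T \<and> E s t) \<and>
     (\<forall>s\<in>S. sum (p s) T = a s) \<and> (\<forall>t\<in>T. (\<Sum>s\<in>S. p s t) \<le> b t)"

lemma nbhd_subset: "nbhd E T A \<subseteq> T"
  unfolding nbhd_def by auto

lemma finite_nbhd: "finite T \<Longrightarrow> finite (nbhd E T A)"
  unfolding nbhd_def by simp

lemma hall_condition_restrict:
  assumes "hall_condition E S T a b" "A \<subseteq> S"
  shows "hall_condition E A (nbhd E T A) a b"
  unfolding hall_condition_def
proof (intro allI impI)
  fix B assume "B \<subseteq> A"
  moreover from this have "nbhd E (nbhd E T A) B = nbhd E T B"
    unfolding nbhd_def by auto
  ultimately show "sum a B \<le> sum b (nbhd E (nbhd E T A) B)"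
    using assms unfolding hall_condition_def by auto
qed

lemma hall_condition_contract_tight:
  assumes hall: "hall_condition E S T a b" and "finite S" "finite T" "A \<subseteq> S"
    and tight: "sum a A = sum b (nbhd E T A)"
  shows "hall_condition E (S - A) (T - nbhd E T A) a b"
  unfolding hall_condition_def
proof (intro allI impI)
  fix B assume B: "B \<subseteq> S - A"
  have fin: "finite A" "finite B"
    using assms B by (auto intro: finite_subset)
  have "nbhd E T (A \<union> B) = nbhd E T A \<union> nbhd E (T - nbhd E T A) B"
    unfolding nbhd_def by auto
  moreover have "sum b (nbhd E T A \<union> nbhd E (T - nbhd E T A) B)
      = sum b (nbhd E T A) + sum b (nbhd E (T - nbhd E T A) B)"
    using \<open>finite T\<close> by (intro sum.union_disjoint) (auto simp: nbhd_def)
  moreover have "sum a (A \<union> B) = sum a A + sum a B"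
    using fin B by (intro sum.union_disjoint) auto
  moreover have "sum a (A \<union> B) \<le> sum b (nbhd E T (A \<union> B))"
    using hall B \<open>A \<subseteq> S\<close> unfolding hall_condition_def by (meson Diff_subset le_sup_iff order_trans)
  ultimately show "sum a B \<le> sum b (nbhd E (T - nbhd E T A) B)"
    using tight by simp
qed

lemma feasible_flow_combine:
  assumes p1: "feasible_flow E A (nbhd E T A) a b p1"
    and p2: "feasible_flow E (S - A) (T - nbhd E T A) a b p2"
    and "A \<subseteq> S" "finite S" "finite T"
  defines "p \<equiv> \<lambda>s. if s \<in> A then p1 s else p2 s"
  shows "feasible_flow E S T a b p"
  unfolding feasible_flow_def
proof (intro conjI allI impI ballI)
  fix s t assume "p s t \<noteq> 0"
  then show "s \<in> S" "t \<in> T" "E s t"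
    using p1 p2 \<open>A \<subseteq> S\<close> nbhd_subset[of E T A] unfolding feasible_flow_def p_def
    by (auto split: if_splits)
next
  fix s assume "s \<in> S"
  show "sum (p s) T = a s"
  proof (cases "s \<in> A")
    case True
    have "sum (p1 s) T = sum (p1 s) (nbhd E T A)"
      using p1 \<open>finite T\<close> nbhd_subset[of E T A] unfolding feasible_flow_def
      by (intro sum.mono_neutral_right) auto
    then show ?thesis using p1 True unfolding feasible_flow_def p_def by simp
  next
    case False
    have "sum (p2 s) T = sum (p2 s) (T - nbhd E T A)"
      using p2 \<open>finite T\<close> unfolding feasible_flow_def
      by (intro sum.mono_neutral_right) auto
    then show ?thesis using p2 False \<open>s \<in> S\<close> unfolding feasible_flow_def p_def by simp
  qed
next
  fix t assume "t \<in> T"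
  have "(\<Sum>s\<in>S. p s t) = (\<Sum>s\<in>A. p1 s t) + (\<Sum>s\<in>S - A. p2 s t)"
    using \<open>A \<subseteq> S\<close> \<open>finite S\<close> by (simp add: sum.subset_diff[of A S] p_def)
  moreover have "(\<Sum>s\<in>S - A. p2 s t) = 0" if "t \<in> nbhd E T A"
    using p2 that unfolding feasible_flow_def by (auto intro!: sum.neutral)
  moreover have "(\<Sum>s\<in>A. p1 s t) = 0" if "t \<notin> nbhd E T A"
    using p1 that unfolding feasible_flow_def by (auto intro!: sum.neutral)
  ultimately show "(\<Sum>s\<in>S. p s t) \<le> b t"
    using p1 p2 \<open>t \<in> T\<close> unfolding feasible_flow_def by (cases "t \<in> nbhd E T A") auto
qed

lemma sum_fun_upd_pred:
  assumes "finite A" "x \<in> A" "(h x :: nat) > 0"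
  shows "sum (h(x := h x - 1)) A + 1 = sum h A"
  using assms by (simp add: sum.remove)

lemma hall_condition_ship_unit:
  assumes hall: "hall_condition E S T a b" and "finite S" "finite T"
    and slack: "\<forall>A\<subseteq>S. A \<noteq> {} \<longrightarrow> A \<noteq> S \<longrightarrow> sum a A < sum b (nbhd E T A)"
    and s0: "s0 \<in> S" "a s0 > 0" and t0: "t0 \<in> T" "E s0 t0" "b t0 > 0"
  shows "hall_condition E S T (a(s0 := a s0 - 1)) (b(t0 := b t0 - 1))"
  unfolding hall_condition_def
proof (intro allI impI)
  fix A assume A: "A \<subseteq> S"
  have fin: "finite A" "finite (nbhd E T A)"
    using A assms(2,3) finite_nbhd by (auto intro: finite_subset)
  have le: "sum a A \<le> sum b (nbhd E T A)"
    using hall A unfolding hall_condition_def by blast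
  have a_le: "sum (a(s0 := a s0 - 1)) A \<le> sum a A"
    by (intro sum_mono) auto
  show "sum (a(s0 := a s0 - 1)) A \<le> sum (b(t0 := b t0 - 1)) (nbhd E T A)"
  proof (cases "t0 \<in> nbhd E T A")
    case False
    then have "sum (b(t0 := b t0 - 1)) (nbhd E T A) = sum b (nbhd E T A)"
      by (intro sum.cong) auto
    then show ?thesis using le a_le by simp
  next
    case True
    then have "A \<noteq> {}"
      unfolding nbhd_def by auto
    note b_dec = sum_fun_upd_pred[of _ _ b, OF fin(2) True \<open>b t0 > 0\<close>]
    show ?thesis
    proof (cases "s0 \<in> A")
      case True
      then show ?thesis
        using sum_fun_upd_pred[of _ _ a, OF fin(1) True \<open>a s0 > 0\<close>] b_dec le by linarith
    next
      case False
      then have "A \<noteq> S" using s0 by blast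
      with slack A \<open>A \<noteq> {}\<close> have "sum a A < sum b (nbhd E T A)" by blast
      moreover have "sum (a(s0 := a s0 - 1)) A = sum a A"
        using False by (intro sum.cong) auto
      ultimately show ?thesis using b_dec by linarith
    qed
  qed
qed

lemma feasible_flow_add_unit:
  assumes p: "feasible_flow E S T (a(s0 := a s0 - 1)) (b(t0 := b t0 - 1)) p"
    and "finite S" "finite T" and s0: "s0 \<in> S" "a s0 > 0" and t0: "t0 \<in> T" "E s0 t0" "b t0 > 0"
  shows "feasible_flow E S T a b (\<lambda>s t. p s t + (if s = s0 \<and> t = t0 then 1 else 0))"
  unfolding feasible_flow_def
proof (intro conjI allI impI ballI)
  fix s t assume "p s t + (if s = s0 \<and> t = t0 then 1 else 0) \<noteq> 0"
  then show "s \<in> S" "t \<in> T" "E s t"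
    using p s0 t0 unfolding feasible_flow_def by (auto split: if_splits)
next
  fix s assume "s \<in> S"
  then show "(\<Sum>t\<in>T. p s t + (if s = s0 \<and> t = t0 then 1 else 0)) = a s"
    using p s0 t0 \<open>finite T\<close> unfolding feasible_flow_def
    by (auto simp: sum.distrib sum.delta split: if_splits)
next
  fix t assume "t \<in> T"
  have "(\<Sum>s\<in>S. p s t + (if s = s0 \<and> t = t0 then 1 else 0))
      = (\<Sum>s\<in>S. p s t) + (if t = t0 then 1 else 0)"
    using s0 \<open>finite S\<close> by (simp add: sum.distrib sum.delta)
  then show "(\<Sum>s\<in>S. p s t + (if s = s0 \<and> t = t0 then 1 else 0)) \<le> b t"
    using p \<open>t \<in> T\<close> t0(3) unfolding feasible_flow_def by (auto split: if_splits)
qed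

text \<open>The induction on
\<open>|S| + a(S)\<close> either splits off a tight proper subset \<open>A\<close> together with its neighbourhood,
or, if there is none, ships a single unit along any edge.\<close>

theorem hall_condition_imp_feasible_flow:
  assumes "finite S" "finite T" "hall_condition E S T a b"
  shows "\<exists>p. feasible_flow E S T a b p"
  using assms
proof (induction "card S + sum a S" arbitrary: S T a b rule: less_induct)
  case less
  have hall: "sum a A \<le> sum b (nbhd E T A)" if "A \<subseteq> S" for A
    using less.prems(3) that unfolding hall_condition_def by blast
  show ?case
  proof (cases "\<exists>A. A \<subseteq> S \<and> A \<noteq> {} \<and> A \<noteq> S \<and> sum a A = sum b (nbhd E T A)")
    case True
    then obtain A where A: "A \<subseteq> S" "A \<noteq> {}" "A \<noteq> S" and tight: "sum a A = sum b (nbhd E T A)"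
      by blast
    have fin: "finite A" "finite (S - A)" "finite (nbhd E T A)" "finite (T - nbhd E T A)"
      using A less.prems(1,2) finite_nbhd by (auto intro: finite_subset)
    have "card A < card S" "card (S - A) < card S"
      using A less.prems(1) by (auto intro: psubset_card_mono)
    moreover have "sum a A \<le> sum a S" "sum a (S - A) \<le> sum a S"
      using A less.prems(1) by (auto intro: sum_mono2)
    ultimately have smaller: "card A + sum a A < card S + sum a S"
        "card (S - A) + sum a (S - A) < card S + sum a S"
      by linarith+
    obtain p1 where "feasible_flow E A (nbhd E T A) a b p1"
      using less.hyps[OF smaller(1) fin(1,3) hall_condition_restrict[OF less.prems(3) A(1)]] ..
    moreover obtain p2 where "feasible_flow E (S - A) (T - nbhd E T A) a b p2"
      using less.hyps[OF smaller(2) fin(2,4)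
          hall_condition_contract_tight[OF less.prems(3,1,2) A(1) tight]] ..
    ultimately show ?thesis
      using feasible_flow_combine[OF _ _ A(1) less.prems(1,2)] by blast
  next
    case False
    with hall have slack: "\<forall>A\<subseteq>S. A \<noteq> {} \<longrightarrow> A \<noteq> S \<longrightarrow> sum a A < sum b (nbhd E T A)"
      by (auto simp: order.strict_iff_order)
    show ?thesis
    proof (cases "\<forall>s\<in>S. a s = 0")
      case True
      then have "feasible_flow E S T a b (\<lambda>_ _. 0)"
        unfolding feasible_flow_def by simp
      then show ?thesis by blast
    next
      case False
      then obtain s0 where s0: "s0 \<in> S" "a s0 > 0"
        by blast
      then have "0 < sum b (nbhd E T {s0})"
        using hall[of "{s0}"] by simp
      then obtain t0 where t0: "t0 \<in> nbhd E T {s0}" "b t0 > 0"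
        by (metis not_gr_zero sum.neutral)
      then have t0': "t0 \<in> T" "E s0 t0"
        unfolding nbhd_def by auto
      have "card S + sum (a(s0 := a s0 - 1)) S < card S + sum a S"
        using sum_fun_upd_pred[of _ _ a, OF less.prems(1) s0] by linarith
      then obtain p where "feasible_flow E S T (a(s0 := a s0 - 1)) (b(t0 := b t0 - 1)) p"
        using less.hyps less.prems(1,2)
          hall_condition_ship_unit[OF less.prems(3,1,2) slack s0 t0' t0(2)] by blast
      then show ?thesis
        using feasible_flow_add_unit[of E S T a s0 b t0] less.prems(1,2) s0 t0' t0(2) by blast
    qed
  qed
qed

definition upward_closed :: "'a set \<Rightarrow> 'a set set \<Rightarrow> bool" where
  "upward_closed I U \<longleftrightarrow> U \<subseteq> Pow I \<and> (\<forall>X\<in>U. \<forall>Y. X \<subseteq> Y \<and> Y \<subseteq> I \<longrightarrow> Y \<in> U)"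

definition downward_closed :: "'a set \<Rightarrow> 'a set set \<Rightarrow> bool" where
  "downward_closed I D \<longleftrightarrow> D \<subseteq> Pow I \<and> (\<forall>Y\<in>D. \<forall>X. X \<subseteq> Y \<longrightarrow> X \<in> D)"

lemma upward_closed_Diff_downward_closed:
  "downward_closed I D \<Longrightarrow> upward_closed I (Pow I - D)"
  unfolding upward_closed_def downward_closed_def by blast

lemma sum_Pow_insert_split:
  fixes f :: "'a set \<Rightarrow> 'b::comm_monoid_add"
  assumes "finite I" "x \<notin> I" "U \<subseteq> Pow (insert x I)"
  shows "sum f U = sum f {X \<in> Pow I. X \<in> U} + sum (\<lambda>X. f (insert x X)) {X \<in> Pow I. insert x X \<in> U}"
proof -
  have U: "U = {X \<in> Pow I. X \<in> U} \<union> insert x ` {X \<in> Pow I. insert x X \<in> U}"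
  proof (intro equalityI subsetI)
    fix X assume X: "X \<in> U"
    show "X \<in> {X \<in> Pow I. X \<in> U} \<union> insert x ` {X \<in> Pow I. insert x X \<in> U}"
    proof (cases "x \<in> X")
      case True
      then have "X = insert x (X - {x})" "X - {x} \<in> Pow I"
        using X assms(3) by auto
      then show ?thesis
        using X by (metis (mono_tags, lifting) UnI2 image_eqI mem_Collect_eq)
    next
      case False
      then show ?thesis
        using X assms(3) by auto
    qed
  qed auto
  have "inj_on (insert x) {X \<in> Pow I. insert x X \<in> U}"
    using assms(2) by (intro inj_onI) (metis PowD Diff_insert_absorb mem_Collect_eq subsetD)
  moreover have "{X \<in> Pow I. X \<in> U} \<inter> insert x ` {X \<in> Pow I. insert x X \<in> U} = {}"
    using assms(2) by auto
  ultimately show ?thesis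
    using assms(1) by (subst U) (simp add: sum.union_disjoint sum.reindex)
qed

lemma chebyshev_sum_two:
  fixes k s0 s1 u0 u1 F0 F1 :: nat
  assumes "k * s0 \<le> u0 * F0" "k * s1 \<le> u1 * F1" "u0 \<le> u1" "F1 \<le> F0"
  shows "2 * k * (s0 + s1) \<le> (u0 + u1) * (F0 + F1)"
proof -
  obtain d where d: "u1 = u0 + d" using assms(3) le_Suc_ex by blast
  obtain e where e: "F0 = F1 + e" using assms(4) le_Suc_ex by blast
  have "2 * k * (s0 + s1) = 2 * (k * s0) + 2 * (k * s1)" by (simp add: algebra_simps)
  also have "\<dots> \<le> 2 * (u0 * F0) + 2 * (u1 * F1)" using assms(1,2) by simp
  also have "\<dots> \<le> (u0 + u1) * (F0 + F1)" unfolding d e by (simp add: algebra_simps)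
  finally show ?thesis .
qed

text \<open>Splitting \<open>U\<close> and \<open>2^I\<close> according to whether a new element \<open>x\<close> is
present gives halves \<open>U\<^sub>0 \<subseteq> U\<^sub>1\<close> and \<open>f \<ge> f(insert x \<cdot>)\<close> that are ordered oppositely, so
Chebyshev's sum inequality combines the two induction hypotheses.\<close>

lemma harris_upward_closed:
  fixes f :: "'a set \<Rightarrow> nat"
  assumes "finite I" "antimono_on (Pow I) f" "upward_closed I U"
  shows "2 ^ card I * sum f U \<le> card U * sum f (Pow I)"
  using assms
proof (induction I arbitrary: f U rule: finite_induct)
  case empty
  then have "U = {} \<or> U = {{}}"
    unfolding upward_closed_def by auto
  then show ?case by auto
next
  case (insert x I)
  define U0 where "U0 = {X \<in> Pow I. X \<in> U}"
  define U1 where "U1 = {X \<in> Pow I. insert x X \<in> U}"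
  define f1 where "f1 = (\<lambda>X. f (insert x X))"
  have U: "U \<subseteq> Pow (insert x I)"
    using insert.prems(2) unfolding upward_closed_def by blast
  note split = sum_Pow_insert_split[OF insert.hyps U]
  have sum_U: "sum f U = sum f U0 + sum f1 U1"
    using split unfolding U0_def U1_def f1_def .
  have card_U: "card U = card U0 + card U1"
    using split[of "\<lambda>_. 1 :: nat"] unfolding U0_def U1_def by simp
  have sum_Pow: "sum f (Pow (insert x I)) = sum f (Pow I) + sum f1 (Pow I)"
  proof -
    have "{X \<in> Pow I. X \<in> Pow (insert x I)} = Pow I"
      "{X \<in> Pow I. insert x X \<in> Pow (insert x I)} = Pow I"
      by auto
    then show ?thesis
      using sum_Pow_insert_split[OF insert.hyps order.refl, of f] unfolding f1_def by simp
  qed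
  have "antimono_on (Pow I) f" "antimono_on (Pow I) f1"
    using insert.prems(1) unfolding f1_def monotone_on_def by (auto intro: insert_mono)
  moreover have "upward_closed I U0"
    using insert.prems(2) unfolding upward_closed_def U0_def by auto (meson subset_insertI2)
  moreover have "upward_closed I U1"
    using insert.prems(2) unfolding upward_closed_def U1_def by auto (meson insert_mono)
  ultimately have "2 ^ card I * sum f U0 \<le> card U0 * sum f (Pow I)"
      "2 ^ card I * sum f1 U1 \<le> card U1 * sum f1 (Pow I)"
    using insert.IH by blast+
  moreover have "card U0 \<le> card U1"
  proof (rule card_mono)
    show "finite U1"
      using insert.hyps(1) unfolding U1_def by simp
    show "U0 \<subseteq> U1"
      using insert.prems(2) unfolding upward_closed_def U0_def U1_def
      by auto (meson insert_mono subset_insertI)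
  qed
  moreover have "sum f1 (Pow I) \<le> sum f (Pow I)"
    using insert.prems(1) unfolding f1_def monotone_on_def
    by (intro sum_mono) (meson Pow_iff insert_mono subset_insertI subset_insertI2)
  ultimately show ?case
    using chebyshev_sum_two insert.hyps by (simp add: sum_U card_U sum_Pow)
qed

lemma harris_downward_closed:
  fixes g :: "'a set \<Rightarrow> nat"
  assumes "finite I" "antimono_on (Pow I) g" "downward_closed I D"
  shows "card D * sum g (Pow I) \<le> 2 ^ card I * sum g D"
proof -
  have D: "D \<subseteq> Pow I" "finite D"
    using assms(1,3) unfolding downward_closed_def by (auto intro: finite_subset)
  have harris: "2 ^ card I * sum g (Pow I - D) \<le> card (Pow I - D) * sum g (Pow I)"
    using harris_upward_closed[OF assms(1,2) upward_closed_Diff_downward_closed[OF assms(3)]] .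
  have "card (Pow I - D) + card D = 2 ^ card I"
    using D assms(1) card_mono[of "Pow I" D] by (simp add: card_Diff_subset card_Pow)
  then have "2 ^ card I * sum g (Pow I) = card (Pow I - D) * sum g (Pow I) + card D * sum g (Pow I)"
    by (metis add_mult_distrib)
  moreover have "sum g (Pow I) = sum g (Pow I - D) + sum g D"
    using D assms(1) by (simp add: sum.subset_diff[of D "Pow I"])
  then have "2 ^ card I * sum g (Pow I) = 2 ^ card I * sum g (Pow I - D) + 2 ^ card I * sum g D"
    by (metis distrib_left)
  ultimately show ?thesis
    using harris by linarith
qed

lemma nbhd_disjoint_eq_image_Diff:
  assumes "\<A> \<subseteq> Pow I"
  shows "nbhd (\<lambda>X Y. X \<inter> Y = {}) (Pow I) \<A> = (\<lambda>X. I - X) ` {X \<in> Pow I. \<exists>Z\<in>\<A>. Z \<subseteq> X}"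
proof (intro equalityI subsetI)
  fix Y assume "Y \<in> nbhd (\<lambda>X Y. X \<inter> Y = {}) (Pow I) \<A>"
  then obtain Z where "Z \<in> \<A>" "Z \<inter> Y = {}" "Y \<subseteq> I"
    unfolding nbhd_def by auto
  with assms have "I - Y \<in> {X \<in> Pow I. \<exists>Z\<in>\<A>. Z \<subseteq> X}" "Y = I - (I - Y)"
    by auto
  then show "Y \<in> (\<lambda>X. I - X) ` {X \<in> Pow I. \<exists>Z\<in>\<A>. Z \<subseteq> X}" by blast
qed (auto simp: nbhd_def)

lemma hall_condition_disjoint:
  fixes f g :: "'a set \<Rightarrow> nat"
  assumes I: "finite I" and f: "antimono_on (Pow I) f" and g: "antimono_on (Pow I) g"
    and le: "sum f (Pow I) \<le> sum g (Pow I)"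
  shows "hall_condition (\<lambda>X Y. X \<inter> Y = {}) (Pow I) (Pow I) f g"
  unfolding hall_condition_def
proof (intro allI impI)
  fix \<A> assume \<A>: "\<A> \<subseteq> Pow I"
  define U where "U = {X \<in> Pow I. \<exists>Z\<in>\<A>. Z \<subseteq> X}"
  define D where "D = nbhd (\<lambda>X Y. X \<inter> Y = {}) (Pow I) \<A>"
  have "upward_closed I U"
    unfolding upward_closed_def U_def by blast
  have "downward_closed I D"
    unfolding downward_closed_def D_def nbhd_def by blast
  have "card D = card U"
    unfolding D_def nbhd_disjoint_eq_image_Diff[OF \<A>] U_def
    by (intro card_image inj_onI) auto
  have "2 ^ card I * sum f \<A> \<le> 2 ^ card I * sum f U"
    using \<A> I unfolding U_def by (intro mult_le_mono2 sum_mono2) auto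
  also have "\<dots> \<le> card U * sum f (Pow I)"
    by (rule harris_upward_closed[OF I f \<open>upward_closed I U\<close>])
  also have "\<dots> \<le> card D * sum g (Pow I)"
    using le \<open>card D = card U\<close> by simp
  also have "\<dots> \<le> 2 ^ card I * sum g D"
    by (rule harris_downward_closed[OF I g \<open>downward_closed I D\<close>])
  finally show "sum f \<A> \<le> sum g (nbhd (\<lambda>X Y. X \<inter> Y = {}) (Pow I) \<A>)"
    unfolding D_def by simp
qed

lemma monotone_dec_Diff:
  assumes "monotone_dec n f" "B \<subseteq> {1..n}" "finite D"
  shows "f B \<le> f (B - D)"
  using assms(3)
proof (induction D rule: finite_induct)
  case (insert i D)
  have "B - D \<subseteq> {1..n}"
    using assms(2) by blast
  then have "f (B - D) \<le> f (B - D - {i})"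
    using assms(1) unfolding monotone_dec_def by blast
  then show ?case
    using insert.IH by (metis Diff_insert order_trans)
qed simp

lemma monotone_dec_imp_antimono_on:
  assumes "monotone_dec n f"
  shows "antimono_on (Pow {1..n}) f"
proof (rule monotone_onI)
  fix A B assume "A \<in> Pow {1..n}" "B \<in> Pow {1..n}" "A \<subseteq> B"
  then have "f B \<le> f (B - (B - A))"
    using monotone_dec_Diff[OF assms] by (simp add: finite_subset)
  also have "B - (B - A) = A"
    using \<open>A \<subseteq> B\<close> by blast
  finally show "f B \<le> f A" .
qed

theorem theorem2p1:
  fixes n :: nat and f g :: "nat set \<Rightarrow> nat"
  assumes "monotone_dec n f" and "monotone_dec n g"
    and "norm1 n f \<le> norm1 n g"
  shows "\<exists>p :: nat set \<Rightarrow> nat set \<Rightarrow> nat.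
    (\<forall>X\<in>Pow {1..n}. \<forall>Y\<in>Pow {1..n}. p X Y \<noteq> 0 \<longrightarrow> X \<inter> Y = {}) \<and>
    norm2 n p = norm1 n f \<and>
    (\<forall>Y\<in>Pow {1..n}. (\<Sum>X\<in>Pow {1..n}. p X Y) \<le> g Y) \<and>
    (\<forall>X\<in>Pow {1..n}. (\<Sum>Y\<in>Pow {1..n}. p X Y) = f X)"
proof -
  have "hall_condition (\<lambda>X Y. X \<inter> Y = {}) (Pow {1..n}) (Pow {1..n}) f g"
    using assms(3) unfolding norm1_def
    by (intro hall_condition_disjoint monotone_dec_imp_antimono_on assms(1,2)) simp_all
  then obtain p where p: "feasible_flow (\<lambda>X Y. X \<inter> Y = {}) (Pow {1..n}) (Pow {1..n}) f g p"
    using hall_condition_imp_feasible_flow by blast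
  then have "norm2 n p = norm1 n f"
    unfolding feasible_flow_def norm2_def norm1_def by simp
  with p show ?thesis
    unfolding feasible_flow_def by (intro exI[of _ p] conjI ballI impI) auto
qed

end
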